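(* Let $H=(V,E)$ be a $k$-uniform hypergraph and let $\mathcal{S}$ be the family of all its exact covers, i.e. all $E'\subseteq E$ with $\bigcup_{e\in E'}e=V$ and $e_1\cap e_2=\emptyset$ for distinct $e_1,e_2\in E'$. Let $f:E\to\mathbb{Z}_{>0}$ be any function and $m$ a positive integer. Then for every subset $U\subseteq V$, in the polynomial ring over $\mathrm{GF}(2^m)$ in the variables $\{v_e\}_{e\in E}$, $$\sum_{X\subseteq V\setminus U} W_{2,f}(H,U,X)=\sum_{E'\in\mathcal{S}}\prod_{e\in E'}v_e^{f(e)},$$ where $$W_{2,f}(H,U,X)=\sum_{E''}\prod_{e\in E''}v_e^{f(e)},$$ the sum ranging over all $E''\subseteq E$ satisfying: (Avoidance) $e\cap X=\emptyset$ for all $e\in E''$; (Cardinality) $|E''|=|V|/k$; (Coverage) $U\subseteq\bigcup_{e\in E''}e$; (Disjointness) $e_1\cap e_2\cap U=\emptyset$ for all distinct $e_1,e_2\in E''$.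
   Context: A hypergraph $H=(V,E)$ consists of a finite vertex set $V$ and a multiset $E$ of subsets of $V$; it is $k$-uniform if every edge has exactly $k$ vertices. Subsets of $E$ are sub-multisets, with each occurrence of an edge treated as a distinct element carrying its own variable $v_e$. *)

theory Defs
  imports Complex_Main "HOL-Library.Poly_Mapping"
begin

text \<open>Hypergraph: vertex set V, edges indexed by a finite index set E (so that
repeated edges of the multiset are distinct elements), the edge with index i being
the vertex set edge i.\<close>

type_synonym ('e, 'k) mpoly = "('e \<Rightarrow>\<^sub>0 nat) \<Rightarrow>\<^sub>0 'k"

definition var :: "'e \<Rightarrow> ('e, 'k::comm_ring_1) mpoly" where
  "var i = Poly_Mapping.single (Poly_Mapping.single i 1) 1"

definition uniform_hypergraph :: "nat \<Rightarrow> 'v set \<Rightarrow> 'e set \<Rightarrow> ('e \<Rightarrow> 'v set) \<Rightarrow> bool" where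
  "uniform_hypergraph k V E edge \<longleftrightarrow> finite V \<and> finite E \<and>
     (\<forall>i\<in>E. edge i \<subseteq> V \<and> card (edge i) = k)"

definition exact_covers :: "'v set \<Rightarrow> 'e set \<Rightarrow> ('e \<Rightarrow> 'v set) \<Rightarrow> 'e set set" where
  "exact_covers V E edge = {E'. E' \<subseteq> E \<and> (\<Union>i\<in>E'. edge i) = V \<and>
     (\<forall>i\<in>E'. \<forall>j\<in>E'. i \<noteq> j \<longrightarrow> edge i \<inter> edge j = {})}"

definition W2_sets :: "nat \<Rightarrow> 'v set \<Rightarrow> 'e set \<Rightarrow> ('e \<Rightarrow> 'v set) \<Rightarrow> 'v set \<Rightarrow> 'v set \<Rightarrow> 'e set set" where
  "W2_sets k V E edge U X = {E''. E'' \<subseteq> E \<and>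
     (\<forall>i\<in>E''. edge i \<inter> X = {}) \<and>
     real (card E'') = real (card V) / real k \<and>
     U \<subseteq> (\<Union>i\<in>E''. edge i) \<and>
     (\<forall>i\<in>E''. \<forall>j\<in>E''. i \<noteq> j \<longrightarrow> edge i \<inter> edge j \<inter> U = {})}"

definition W2f :: "nat \<Rightarrow> 'v set \<Rightarrow> 'e set \<Rightarrow> ('e \<Rightarrow> 'v set) \<Rightarrow> ('e \<Rightarrow> nat) \<Rightarrow> 'v set \<Rightarrow> 'v set
    \<Rightarrow> ('e, 'k::comm_ring_1) mpoly" where
  "W2f k V E edge f U X = (\<Sum>E''\<in>W2_sets k V E edge U X. \<Prod>i\<in>E''. var i ^ f i)"

end

theory Submission
  imports Defs "HOL-Number_Theory.Residues"
begin

text \<open>Exchange the two sums. A family \<open>E''\<close> satisfying the cardinality, coverage and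
disjointness conditions is counted once for each \<open>X \<subseteq> V - U\<close> avoiding its edges, i.e.
\<open>2 ^ card (V - U - \<Union>E'')\<close> times, which vanishes in characteristic 2 unless \<open>E''\<close> covers all
of \<open>V\<close>. A cover of \<open>V\<close> by \<open>card V / k\<close> sets of size \<open>k\<close> has no overlaps, so the surviving
families are exactly the exact covers.\<close>

lemma CHAR_eq_2_if_card_eq_power_2:
  assumes "card (UNIV :: 'k::{field,finite} set) = 2 ^ m" "m > 0"
  shows "CHAR('k) = 2"
proof -
  have "prime CHAR('k)"
    by (intro prime_CHAR_semidom finite_imp_CHAR_pos) simp
  moreover have "CHAR('k) dvd 2 ^ m"
    using CHAR_dvd_CARD[where 'a='k] assms(1) by simp
  ultimately show ?thesis
    by (metis prime_dvd_power primes_dvd_imp_eq two_is_prime_nat)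
qed

lemma mpoly_two_eq_zero:
  assumes "(2::'k::comm_ring_1) = 0"
  shows "(2::('e, 'k) mpoly) = 0"
proof (rule poly_mapping_eqI)
  fix \<mu>
  have "Poly_Mapping.lookup (2::('e, 'k) mpoly) \<mu>
      = Poly_Mapping.lookup 1 \<mu> + Poly_Mapping.lookup 1 \<mu>"
    by (simp only: one_add_one[symmetric] lookup_add)
  also have "\<dots> = 2 * Poly_Mapping.lookup 1 \<mu>"
    by (simp only: mult_2)
  finally show "Poly_Mapping.lookup (2::('e, 'k) mpoly) \<mu> = Poly_Mapping.lookup 0 \<mu>"
    using assms by simp
qed

lemma sum_subsets_avoiding_char_2:
  fixes c :: "'a::semiring_1"
  assumes "finite S" and "(2::'a) = 0"
  shows "(\<Sum>X\<in>{X\<in>Pow S. X \<inter> A = {}}. c) = (if S \<subseteq> A then c else 0)"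
proof -
  have "{X\<in>Pow S. X \<inter> A = {}} = Pow (S - A)" by auto
  then have "(\<Sum>X\<in>{X\<in>Pow S. X \<inter> A = {}}. c) = 2 ^ card (S - A) * c"
    using assms(1) by (simp add: card_Pow)
  moreover have "card (S - A) > 0 \<longleftrightarrow> \<not> S \<subseteq> A"
    using assms(1) by (auto simp: card_gt_0_iff)
  ultimately show ?thesis
    using assms(2) by (cases "card (S - A)") auto
qed

lemma disjoint_if_card_UN_eq_sum_card:
  assumes "finite I" "\<forall>i\<in>I. finite (A i)"
    and "card (\<Union>i\<in>I. A i) = (\<Sum>i\<in>I. card (A i))"
    and "i \<in> I" "j \<in> I" "i \<noteq> j"
  shows "A i \<inter> A j = {}"
proof (rule ccontr)
  assume overlap: "A i \<inter> A j \<noteq> {}"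
  let ?R = "I - {i, j}"
  have fin: "finite (A i)" "finite (A j)" using assms by auto
  have "(\<Sum>l\<in>I. card (A l)) = card (A i) + (\<Sum>l\<in>I - {i}. card (A l))"
    using assms by (simp add: sum.remove)
  also have "(\<Sum>l\<in>I - {i}. card (A l)) = card (A j) + (\<Sum>l\<in>I - {i} - {j}. card (A l))"
    by (rule sum.remove) (use assms in auto)
  finally have sum_split: "(\<Sum>l\<in>I. card (A l)) = card (A i) + card (A j) + (\<Sum>l\<in>?R. card (A l))"
    by (simp add: Diff_insert2[symmetric] insert_commute)
  have "(\<Union>l\<in>I. A l) = (A i \<union> A j) \<union> (\<Union>l\<in>?R. A l)" using assms(4,5) by blast
  then have "card (\<Union>l\<in>I. A l) \<le> card (A i \<union> A j) + card (\<Union>l\<in>?R. A l)"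
    by (simp only: card_Un_le)
  also have "\<dots> \<le> card (A i \<union> A j) + (\<Sum>l\<in>?R. card (A l))"
    using card_UN_le[of ?R A] assms(1) by simp
  also have "card (A i \<union> A j) < card (A i) + card (A j)"
    using card_Un_Int[OF fin] overlap fin by (simp add: card_gt_0_iff)
  finally show False using sum_split assms(3) by simp
qed

lemma exact_cover_iff_card_mult:
  assumes "uniform_hypergraph k V E edge" "E' \<subseteq> E" "(\<Union>i\<in>E'. edge i) = V"
  shows "(\<forall>i\<in>E'. \<forall>j\<in>E'. i \<noteq> j \<longrightarrow> edge i \<inter> edge j = {}) \<longleftrightarrow> card E' * k = card V"
proof -
  have fin: "finite E'" and fin_edge: "\<forall>i\<in>E'. finite (edge i)"
    and card_edge: "\<And>i. i \<in> E' \<Longrightarrow> card (edge i) = k"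
    using assms unfolding uniform_hypergraph_def by (auto intro: finite_subset)
  have sum_card: "(\<Sum>i\<in>E'. card (edge i)) = card E' * k"
    using card_edge by simp
  show ?thesis
  proof
    assume "\<forall>i\<in>E'. \<forall>j\<in>E'. i \<noteq> j \<longrightarrow> edge i \<inter> edge j = {}"
    then show "card E' * k = card V"
      using card_UN_disjoint[OF fin fin_edge] sum_card assms(3) by simp
  next
    assume "card E' * k = card V"
    then have "card (\<Union>i\<in>E'. edge i) = (\<Sum>i\<in>E'. card (edge i))"
      using sum_card assms(3) by simp
    then show "\<forall>i\<in>E'. \<forall>j\<in>E'. i \<noteq> j \<longrightarrow> edge i \<inter> edge j = {}"
      using disjoint_if_card_UN_eq_sum_card[OF fin fin_edge] by blast
  qed
qed

lemma W2_sets_covering_eq_exact_covers: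
  assumes "k > 0" "uniform_hypergraph k V E edge" "U \<subseteq> V"
  shows "{E''\<in>W2_sets k V E edge U {}. V - U \<subseteq> (\<Union>i\<in>E''. edge i)} = exact_covers V E edge"
proof -
  have edges_in_V: "(\<Union>i\<in>E'. edge i) \<subseteq> V" if "E' \<subseteq> E" for E'
    using that assms(2) unfolding uniform_hypergraph_def by blast
  have card_cond: "real (card E') = real (card V) / real k \<longleftrightarrow> card E' * k = card V" for E'
    using assms(1) by (simp add: field_simps flip: of_nat_mult)
  show ?thesis
  proof (intro Set.set_eqI iffI)
    fix E'' assume "E'' \<in> {E''\<in>W2_sets k V E edge U {}. V - U \<subseteq> (\<Union>i\<in>E''. edge i)}"
    then have sub: "E'' \<subseteq> E" and card: "card E'' * k = card V"
      and "U \<subseteq> (\<Union>i\<in>E''. edge i)" "V - U \<subseteq> (\<Union>i\<in>E''. edge i)"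
      unfolding W2_sets_def card_cond by auto
    then have un: "(\<Union>i\<in>E''. edge i) = V"
      using edges_in_V[OF sub] by blast
    then show "E'' \<in> exact_covers V E edge"
      unfolding exact_covers_def using exact_cover_iff_card_mult[OF assms(2) sub un] card sub by blast
  next
    fix E'' assume "E'' \<in> exact_covers V E edge"
    then have sub: "E'' \<subseteq> E" and un: "(\<Union>i\<in>E''. edge i) = V"
      and disj: "\<forall>i\<in>E''. \<forall>j\<in>E''. i \<noteq> j \<longrightarrow> edge i \<inter> edge j = {}"
      unfolding exact_covers_def by auto
    then have "card E'' * k = card V"
      using exact_cover_iff_card_mult[OF assms(2) sub un] by blast
    then show "E'' \<in> {E''\<in>W2_sets k V E edge U {}. V - U \<subseteq> (\<Union>i\<in>E''. edge i)}"
      unfolding W2_sets_def card_cond using sub un disj assms(3) by auto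
  qed
qed

theorem lemma2p4:
  fixes V :: "'v set" and E :: "'e set" and edge :: "'e \<Rightarrow> 'v set"
    and k :: nat and f :: "'e \<Rightarrow> nat" and m :: nat and U :: "'v set"
  assumes "k > 0"
    and "uniform_hypergraph k V E edge"
    and "\<And>i. i \<in> E \<Longrightarrow> f i > 0"
    and "m > 0"
    and "card (UNIV :: 'k set) = 2 ^ m"
    and "U \<subseteq> V"
  shows "(\<Sum>X\<in>Pow (V - U). (W2f k V E edge f U X :: ('e, 'k::{field,finite}) mpoly))
       = (\<Sum>E'\<in>exact_covers V E edge. \<Prod>i\<in>E'. var i ^ f i)"
proof -
  let ?T = "W2_sets k V E edge U {}" \<comment> \<open>with \<open>X = {}\<close> the avoidance condition is vacuous\<close>
  let ?P = "\<lambda>E''. (\<Prod>i\<in>E''. var i ^ f i) :: ('e, 'k) mpoly"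
  let ?cov = "\<lambda>E''. \<Union>i\<in>E''. edge i"
  have two: "(2::('e, 'k) mpoly) = 0"
    using CHAR_eq_2_if_card_eq_power_2[OF assms(5,4)]
    by (metis mpoly_two_eq_zero of_nat_CHAR of_nat_numeral)
  have fin: "finite V" "finite ?T"
    using assms(2) unfolding uniform_hypergraph_def W2_sets_def
    by (auto intro: finite_subset[of _ "Pow E"])
  have W2f_eq: "W2f k V E edge f U X = (\<Sum>E''\<in>{E''\<in>?T. X \<inter> ?cov E'' = {}}. ?P E'')" for X
    unfolding W2f_def by (rule arg_cong[where f = "\<lambda>S. \<Sum>E''\<in>S. ?P E''"]) (auto simp: W2_sets_def)
  have "(\<Sum>X\<in>Pow (V - U). W2f k V E edge f U X)
      = (\<Sum>X\<in>Pow (V - U). \<Sum>E''\<in>{E''\<in>?T. X \<inter> ?cov E'' = {}}. ?P E'')"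
    by (simp only: W2f_eq)
  also have "\<dots> = (\<Sum>E''\<in>?T. \<Sum>X\<in>{X\<in>Pow (V - U). X \<inter> ?cov E'' = {}}. ?P E'')"
    by (rule sum.swap_restrict) (use fin in auto)
  also have "\<dots> = (\<Sum>E''\<in>?T. if V - U \<subseteq> ?cov E'' then ?P E'' else 0)"
    using fin by (intro sum.cong refl sum_subsets_avoiding_char_2[OF _ two]) simp
  also have "\<dots> = (\<Sum>E''\<in>{E''\<in>?T. V - U \<subseteq> ?cov E''}. ?P E'')"
    using fin by (simp add: sum.inter_filter)
  also have "\<dots> = (\<Sum>E'\<in>exact_covers V E edge. ?P E')"
    by (simp only: W2_sets_covering_eq_exact_covers[OF assms(1,2,6)])
  finally show ?thesis .
qed

end
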